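(* Let $N\geq3$, $J>0$, $\gamma>0$, and let $$H_W=J\sum_{i=1}^N\left[-2\sigma_i^z+\sigma_i^z\sigma_{i+1}^z-\gamma\,\boldsymbol{\sigma}_i\cdot\boldsymbol{\sigma}_{i+1}\right]$$ on $(\mathbb{C}^2)^{\otimes N}$ with periodic boundary conditions. Then $|W_N\rangle=\frac{1}{\sqrt N}\left(|10\cdots0\rangle+|010\cdots0\rangle+\cdots+|0\cdots01\rangle\right)$ is a ground state of $H_W$ (an eigenvector for its smallest eigenvalue), and the ground space is degenerate (it also contains $|0\rangle^{\otimes N}$).
   Context: $\sigma^x,\sigma^y,\sigma^z$ are the Pauli matrices with $\sigma^z|0\rangle=|0\rangle$, $\sigma^z|1\rangle=-|1\rangle$; $\sigma_i^a$ acts on qubit $i$; $\boldsymbol{\sigma}_i\cdot\boldsymbol{\sigma}_{j}=\sigma_i^x\sigma_j^x+\sigma_i^y\sigma_j^y+\sigma_i^z\sigma_j^z$. Periodic boundary conditions: site indices are taken mod $N$, so $\sigma_{N+1}=\sigma_1$. *)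

theory Defs
  imports Complex_Main "Jordan_Normal_Form.Char_Poly"
begin

text \<open>Computational basis of (C^2)^(tensor N): index k < 2^N; qubit j (0 \<le> j < N) is in
  state |1> iff bit j of k is set. Sites are 0..N-1 with periodic wrap-around (j+1) mod N.\<close>

definition qbit :: "nat \<Rightarrow> nat \<Rightarrow> bool" where
  "qbit k j = odd (k div 2 ^ j)"

datatype pauli_axis = PX | PY | PZ

text \<open>Single-qubit Pauli matrix entry <b|sigma^a|c>, with False = |0>, True = |1>;
  sigma^z|0> = |0>, sigma^z|1> = -|1>.\<close>
fun pauli_entry :: "pauli_axis \<Rightarrow> bool \<Rightarrow> bool \<Rightarrow> complex" where
  "pauli_entry PX b c = (if b \<noteq> c then 1 else 0)"
| "pauli_entry PY b c = (if b \<and> \<not> c then \<i> else if \<not> b \<and> c then - \<i> else 0)"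
| "pauli_entry PZ b c = (if b = c then (if b then -1 else 1) else 0)"

definition sigma :: "nat \<Rightarrow> pauli_axis \<Rightarrow> nat \<Rightarrow> complex mat" where
  "sigma N a i = mat (2 ^ N) (2 ^ N)
     (\<lambda>(r, c). if (\<forall>j<N. j \<noteq> i \<longrightarrow> qbit r j = qbit c j)
               then pauli_entry a (qbit r i) (qbit c i) else 0)"

primrec mat_sum :: "nat \<Rightarrow> (nat \<Rightarrow> complex mat) \<Rightarrow> nat \<Rightarrow> complex mat" where
  "mat_sum n f 0 = 0\<^sub>m n n"
| "mat_sum n f (Suc m) = mat_sum n f m + f m"

definition H_W :: "nat \<Rightarrow> real \<Rightarrow> real \<Rightarrow> complex mat" where
  "H_W N J \<gamma> = complex_of_real J \<cdot>\<^sub>m mat_sum (2 ^ N)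
     (\<lambda>i. let i' = (i + 1) mod N in
        (- 2) \<cdot>\<^sub>m sigma N PZ i
        + sigma N PZ i * sigma N PZ i'
        - complex_of_real \<gamma> \<cdot>\<^sub>m
            (sigma N PX i * sigma N PX i' + sigma N PY i * sigma N PY i'
             + sigma N PZ i * sigma N PZ i')) N"

definition W_state :: "nat \<Rightarrow> complex vec" where
  "W_state N = vec (2 ^ N)
     (\<lambda>k. if card {j. j < N \<and> qbit k j} = 1 then complex_of_real (1 / sqrt (real N)) else 0)"

definition zero_state :: "nat \<Rightarrow> complex vec" where
  "zero_state N = vec (2 ^ N) (\<lambda>k. if k = 0 then 1 else 0)"

end

theory Submission
  imports Defs "HOL-Combinatorics.Transposition"
begin

text \<open>In the computational basis each bond term of \<open>H_W\<close> acts diagonally and, when the two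
  spins of the bond differ, also hops the excitation across the bond with amplitude \<open>-2\<gamma>\<close>.
  Sharing the field \<open>-2 z\<^sub>i\<close> between the two bonds at site \<open>i\<close>, a basis state receives from
  each bond the energy \<open>-z\<^sub>i - z\<^sub>i\<^sub>' + (1 - \<gamma>) z\<^sub>i z\<^sub>i\<^sub>'\<close>; minus the hopping amplitude this is at
  least \<open>-1 - \<gamma>\<close>, with equality unless both spins are up. Reading the eigenvalue equation at a
  coordinate of maximal modulus (a Gershgorin argument) then gives \<open>Re \<mu> \<ge> -JN(1 + \<gamma>)\<close> for
  every eigenvalue. Hopping preserves the number of excitations, so every vector whose amplitudes
  depend only on that number and vanish from two excitations on, such as \<open>|0\<dots>0\<rangle>\<close> and
  \<open>|W\<^sub>N\<rangle>\<close>, is an eigenvector for exactly this value.\<close>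

lemma eigenvalue_Re_ge_row_bound:
  fixes A :: "complex mat" and I :: "'i set"
  assumes A: "A \<in> carrier_mat n n"
    and action: "\<And>v r. v \<in> carrier_vec n \<Longrightarrow> r < n \<Longrightarrow>
                   (A *\<^sub>v v) $ r = d r * v $ r + (\<Sum>i\<in>I. c r i * v $ p r i)"
    and target: "\<And>r i. r < n \<Longrightarrow> i \<in> I \<Longrightarrow> p r i < n"
    and row_bound: "\<And>r. r < n \<Longrightarrow> m \<le> Re (d r) - (\<Sum>i\<in>I. cmod (c r i))"
    and "eigenvalue A \<mu>"
  shows "m \<le> Re \<mu>"
proof -
  obtain v where v: "v \<in> carrier_vec n" and v_nz: "v \<noteq> 0\<^sub>v n" and Av: "A *\<^sub>v v = \<mu> \<cdot>\<^sub>v v"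
    using \<open>eigenvalue A \<mu>\<close> A unfolding eigenvalue_def eigenvector_def by auto
  have "n \<noteq> 0"
  proof
    assume "n = 0"
    then have "v = 0\<^sub>v n"
      using v by (intro eq_vecI) auto
    with v_nz show False ..
  qed
  define M where "M = Max ((\<lambda>s. cmod (v $ s)) ` {..<n})"
  have "M \<in> (\<lambda>s. cmod (v $ s)) ` {..<n}"
    unfolding M_def using \<open>n \<noteq> 0\<close> by (intro Max_in) auto
  then obtain r where r: "r < n" and vr_M: "cmod (v $ r) = M"
    by auto
  have r_max: "cmod (v $ s) \<le> cmod (v $ r)" if "s < n" for s
    using that unfolding vr_M M_def by (intro Max_ge) auto
  have vr: "cmod (v $ r) > 0"
  proof (rule ccontr)
    assume "\<not> cmod (v $ r) > 0"
    then have "v = 0\<^sub>v n"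
      using r_max v by (intro eq_vecI) fastforce+
    with v_nz show False ..
  qed
  have "(\<mu> - d r) * v $ r = (\<Sum>i\<in>I. c r i * v $ p r i)"
    using action[OF v r] Av v r by (auto simp: algebra_simps)
  then have "cmod (\<mu> - d r) * cmod (v $ r) = cmod (\<Sum>i\<in>I. c r i * v $ p r i)"
    by (metis norm_mult)
  also have "\<dots> \<le> (\<Sum>i\<in>I. cmod (c r i) * cmod (v $ p r i))"
    using norm_sum[of "\<lambda>i. c r i * v $ p r i" I] by (simp add: norm_mult)
  also have "\<dots> \<le> (\<Sum>i\<in>I. cmod (c r i)) * cmod (v $ r)"
    unfolding sum_distrib_right using r target r_max by (intro sum_mono mult_left_mono) auto
  finally have "cmod (\<mu> - d r) \<le> (\<Sum>i\<in>I. cmod (c r i))"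
    using vr by simp
  moreover have "Re (d r) - cmod (\<mu> - d r) \<le> Re \<mu>"
    using abs_Re_le_cmod[of "\<mu> - d r"] by simp
  ultimately show ?thesis
    using row_bound[OF r] by linarith
qed

lemma qbit_eq_bit: "qbit k j = bit k j"
  by (simp add: qbit_def bit_nat_def)

lemma bit_imp_less_of_less_pow2: "(c::nat) < 2 ^ N \<Longrightarrow> bit c j \<Longrightarrow> j < N"
  by (metis bit_take_bit_iff take_bit_nat_eq_self_iff)

lemma eq_if_bits_eq_below:
  "(a::nat) < 2 ^ N \<Longrightarrow> b < 2 ^ N \<Longrightarrow> (\<And>j. j < N \<Longrightarrow> bit a j = bit b j) \<Longrightarrow> a = b"
  by (metis bit_eq_iff bit_imp_less_of_less_pow2)

lemma flip_bit_less_pow2: "(r::nat) < 2 ^ N \<Longrightarrow> i < N \<Longrightarrow> flip_bit i r < 2 ^ N"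
  by (metis bit_flip_bit_iff bit_imp_less_of_less_pow2 bit_take_bit_iff
      take_bit_nat_eq_self_iff bit_eq_iff)

lemma agree_off_site_iff:
  assumes "(r::nat) < 2 ^ N" "c < 2 ^ N" "i < N"
  shows "(\<forall>j<N. j \<noteq> i \<longrightarrow> bit r j = bit c j) \<longleftrightarrow> c = r \<or> c = flip_bit i r"
proof
  assume agree: "\<forall>j<N. j \<noteq> i \<longrightarrow> bit r j = bit c j"
  show "c = r \<or> c = flip_bit i r"
  proof (cases "bit c i = bit r i")
    case True
    then have "c = r"
      using agree assms by (intro eq_if_bits_eq_below[of c N r]) auto
    then show ?thesis ..
  next
    case False
    then have "c = flip_bit i r"
      using agree assms flip_bit_less_pow2
      by (intro eq_if_bits_eq_below[of c N]) (auto simp: bit_flip_bit_iff)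
    then show ?thesis ..
  qed
qed (auto simp: bit_flip_bit_iff)

lemma sigma_carrier_mat [simp]: "sigma N a i \<in> carrier_mat (2 ^ N) (2 ^ N)"
  by (simp add: sigma_def)

lemma sigma_mult_vec_index:
  assumes v: "v \<in> carrier_vec (2 ^ N)" and r: "r < 2 ^ N" and i: "i < N"
  shows "(sigma N a i *\<^sub>v v) $ r = pauli_entry a (bit r i) (bit r i) * v $ r
          + pauli_entry a (bit r i) (\<not> bit r i) * v $ flip_bit i r"
proof -
  let ?f = "\<lambda>c. (if \<forall>j<N. j \<noteq> i \<longrightarrow> qbit r j = qbit c j
               then pauli_entry a (qbit r i) (qbit c i) else 0) * v $ c"
  have flip_less: "flip_bit i r < 2 ^ N"
    using r i by (rule flip_bit_less_pow2)
  have flip_ne: "flip_bit i r \<noteq> r"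
    using bit_flip_bit_iff[of i r i] by auto
  have "(sigma N a i *\<^sub>v v) $ r = (\<Sum>c\<in>{0..<2 ^ N}. ?f c)"
    using v r by (simp add: sigma_def scalar_prod_def row_def)
  also have "\<dots> = (\<Sum>c\<in>{r, flip_bit i r}. ?f c)"
    using r flip_less agree_off_site_iff[OF r _ i]
    by (intro sum.mono_neutral_right) (auto simp: qbit_eq_bit)
  also have "\<dots> = ?f r + ?f (flip_bit i r)"
    using flip_ne by simp
  finally show ?thesis
    by (simp add: qbit_eq_bit bit_flip_bit_iff)
qed

lemma sigma_mult_vec_carrier_vec [simp]:
  "v \<in> carrier_vec (2 ^ N) \<Longrightarrow> sigma N a i *\<^sub>v v \<in> carrier_vec (2 ^ N)"
  by (rule mult_mat_vec_carrier[OF sigma_carrier_mat])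

definition zsign :: "bool \<Rightarrow> real" where
  "zsign b = (if b then -1 else 1)"

lemma sigmaZ_mult_vec_index:
  "v \<in> carrier_vec (2 ^ N) \<Longrightarrow> r < 2 ^ N \<Longrightarrow> i < N \<Longrightarrow>
   (sigma N PZ i *\<^sub>v v) $ r = of_real (zsign (bit r i)) * v $ r"
  by (simp add: sigma_mult_vec_index zsign_def)

lemma sigmaX_mult_vec_index:
  "v \<in> carrier_vec (2 ^ N) \<Longrightarrow> r < 2 ^ N \<Longrightarrow> i < N \<Longrightarrow>
   (sigma N PX i *\<^sub>v v) $ r = v $ flip_bit i r"
  by (simp add: sigma_mult_vec_index)

lemma sigmaY_mult_vec_index:
  "v \<in> carrier_vec (2 ^ N) \<Longrightarrow> r < 2 ^ N \<Longrightarrow> i < N \<Longrightarrow>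
   (sigma N PY i *\<^sub>v v) $ r = (if bit r i then \<i> else - \<i>) * v $ flip_bit i r"
  by (simp add: sigma_mult_vec_index)

lemma sigma_mult_sigma_carrier_mat [simp]:
  "sigma N a i * sigma N b j \<in> carrier_mat (2 ^ N) (2 ^ N)"
  by (rule mult_carrier_mat[OF sigma_carrier_mat sigma_carrier_mat])

lemma sigma_mult_sigma_mult_vec:
  "v \<in> carrier_vec (2 ^ N) \<Longrightarrow> (sigma N a i * sigma N b j) *\<^sub>v v = sigma N a i *\<^sub>v (sigma N b j *\<^sub>v v)"
  by (rule assoc_mult_mat_vec[OF sigma_carrier_mat sigma_carrier_mat])

lemma sigmaZZ_mult_vec_index:
  "v \<in> carrier_vec (2 ^ N) \<Longrightarrow> r < 2 ^ N \<Longrightarrow> i < N \<Longrightarrow> j < N \<Longrightarrow>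
   ((sigma N PZ i * sigma N PZ j) *\<^sub>v v) $ r = of_real (zsign (bit r i) * zsign (bit r j)) * v $ r"
  by (simp add: sigma_mult_sigma_mult_vec sigmaZ_mult_vec_index)

lemma sigmaXX_plus_YY_mult_vec_index:
  assumes "v \<in> carrier_vec (2 ^ N)" "r < 2 ^ N" "i < N" "j < N" "i \<noteq> j"
  shows "((sigma N PX i * sigma N PX j) *\<^sub>v v) $ r + ((sigma N PY i * sigma N PY j) *\<^sub>v v) $ r
     = (if bit r i = bit r j then 0 else 2) * v $ flip_bit j (flip_bit i r)"
proof -
  have "flip_bit i r < 2 ^ N"
    using assms flip_bit_less_pow2 by blast
  moreover have "bit (flip_bit i r) j = bit r j"
    using assms by (simp add: bit_flip_bit_iff)
  ultimately show ?thesis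
    using assms by (simp add: sigma_mult_sigma_mult_vec sigmaX_mult_vec_index sigmaY_mult_vec_index)
qed

lemma add_mat_mult_vec_index:
  "(A :: 'a :: comm_ring_1 mat) \<in> carrier_mat n n \<Longrightarrow> B \<in> carrier_mat n n \<Longrightarrow> v \<in> carrier_vec n \<Longrightarrow>
   r < n \<Longrightarrow> ((A + B) *\<^sub>v v) $ r = (A *\<^sub>v v) $ r + (B *\<^sub>v v) $ r"
  by (simp add: add_mult_distrib_mat_vec)

lemma minus_mat_mult_vec_index:
  "(A :: 'a :: comm_ring_1 mat) \<in> carrier_mat n n \<Longrightarrow> B \<in> carrier_mat n n \<Longrightarrow> v \<in> carrier_vec n \<Longrightarrow>
   r < n \<Longrightarrow> ((A - B) *\<^sub>v v) $ r = (A *\<^sub>v v) $ r - (B *\<^sub>v v) $ r"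
  by (subst minus_mult_distrib_mat_vec[of A n n B v]) auto

lemma smult_mat_mult_vec_index:
  "(A :: 'a :: comm_ring_1 mat) \<in> carrier_mat n n \<Longrightarrow> v \<in> carrier_vec n \<Longrightarrow> r < n \<Longrightarrow>
   ((c \<cdot>\<^sub>m A) *\<^sub>v v) $ r = c * (A *\<^sub>v v) $ r"
  by (simp add: scalar_prod_def sum_distrib_left mult.assoc)

lemma mat_sum_carrier_mat:
  "(\<And>i. i < m \<Longrightarrow> f i \<in> carrier_mat n n) \<Longrightarrow> mat_sum n f m \<in> carrier_mat n n"
  by (induction m) auto

lemma mat_sum_mult_vec_index:
  assumes "\<And>i. i < m \<Longrightarrow> f i \<in> carrier_mat n n" "v \<in> carrier_vec n" "r < n"
  shows "(mat_sum n f m *\<^sub>v v) $ r = (\<Sum>i<m. (f i *\<^sub>v v) $ r)"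
  using assms(1)
proof (induction m)
  case 0
  then show ?case
    using assms(2,3) by (simp add: scalar_prod_def)
next
  case (Suc m)
  have "f m \<in> carrier_mat n n" "mat_sum n f m \<in> carrier_mat n n"
    using Suc.prems mat_sum_carrier_mat[of m f n] by auto
  then have "(mat_sum n f (Suc m) *\<^sub>v v) $ r = (mat_sum n f m *\<^sub>v v) $ r + (f m *\<^sub>v v) $ r"
    using assms(2,3) by (simp add: add_mat_mult_vec_index del: index_mult_mat_vec)
  then show ?case
    using Suc by simp
qed

lemma next_site_neq: "2 \<le> (N::nat) \<Longrightarrow> i < N \<Longrightarrow> (i + 1) mod N \<noteq> i"
  by (cases "i + 1 = N") auto

definition bond_hamiltonian :: "nat \<Rightarrow> real \<Rightarrow> nat \<Rightarrow> complex mat" where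
  "bond_hamiltonian N \<gamma> i = (let i' = (i + 1) mod N in
        (- 2) \<cdot>\<^sub>m sigma N PZ i
        + sigma N PZ i * sigma N PZ i'
        - complex_of_real \<gamma> \<cdot>\<^sub>m
            (sigma N PX i * sigma N PX i' + sigma N PY i * sigma N PY i'
             + sigma N PZ i * sigma N PZ i'))"

lemma H_W_eq_sum_bond_hamiltonian:
  "H_W N J \<gamma> = complex_of_real J \<cdot>\<^sub>m mat_sum (2 ^ N) (bond_hamiltonian N \<gamma>) N"
  unfolding H_W_def bond_hamiltonian_def[abs_def] by simp

lemma bond_hamiltonian_carrier_mat: "bond_hamiltonian N \<gamma> i \<in> carrier_mat (2 ^ N) (2 ^ N)"
  unfolding bond_hamiltonian_def Let_def
  by (intro minus_carrier_mat add_carrier_mat smult_carrier_mat sigma_mult_sigma_carrier_mat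
      sigma_carrier_mat)

lemma H_W_carrier_mat: "H_W N J \<gamma> \<in> carrier_mat (2 ^ N) (2 ^ N)"
  unfolding H_W_eq_sum_bond_hamiltonian
  by (intro smult_carrier_mat mat_sum_carrier_mat bond_hamiltonian_carrier_mat)

definition bond_diag :: "nat \<Rightarrow> real \<Rightarrow> nat \<Rightarrow> nat \<Rightarrow> real" where
  "bond_diag N \<gamma> r i =
     -2 * zsign (bit r i) + (1 - \<gamma>) * zsign (bit r i) * zsign (bit r ((i + 1) mod N))"

definition bond_hop :: "nat \<Rightarrow> nat \<Rightarrow> nat \<Rightarrow> real" where
  "bond_hop N r i = (if bit r i = bit r ((i + 1) mod N) then 0 else 2)"

definition swap_bond :: "nat \<Rightarrow> nat \<Rightarrow> nat \<Rightarrow> nat" where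
  "swap_bond N r i = flip_bit ((i + 1) mod N) (flip_bit i r)"

lemma swap_bond_less_pow2: "2 \<le> N \<Longrightarrow> i < N \<Longrightarrow> r < 2 ^ N \<Longrightarrow> swap_bond N r i < 2 ^ N"
  unfolding swap_bond_def by (intro flip_bit_less_pow2) auto

lemma bond_hamiltonian_mult_vec_index:
  assumes "2 \<le> N" "i < N" "v \<in> carrier_vec (2 ^ N)" "r < 2 ^ N"
  shows "(bond_hamiltonian N \<gamma> i *\<^sub>v v) $ r =
           of_real (bond_diag N \<gamma> r i) * v $ r - of_real (\<gamma> * bond_hop N r i) * v $ swap_bond N r i"
proof -
  let ?j = "(i + 1) mod N"
  have j: "?j < N" "i \<noteq> ?j"
    using assms next_site_neq[of N i] by auto
  have "(bond_hamiltonian N \<gamma> i *\<^sub>v v) $ r =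
          -2 * (sigma N PZ i *\<^sub>v v) $ r + ((sigma N PZ i * sigma N PZ ?j) *\<^sub>v v) $ r
          - of_real \<gamma> * ((((sigma N PX i * sigma N PX ?j) *\<^sub>v v) $ r
                            + ((sigma N PY i * sigma N PY ?j) *\<^sub>v v) $ r)
                          + ((sigma N PZ i * sigma N PZ ?j) *\<^sub>v v) $ r)"
    unfolding bond_hamiltonian_def Let_def using assms
    by (simp add: add_mat_mult_vec_index[where n = "2 ^ N"] minus_mat_mult_vec_index[where n = "2 ^ N"]
        smult_mat_mult_vec_index[where n = "2 ^ N"] del: index_mult_mat_vec)
  also have "\<dots> = of_real (bond_diag N \<gamma> r i) * v $ r
                    - of_real (\<gamma> * bond_hop N r i) * v $ swap_bond N r i"
    unfolding sigmaXX_plus_YY_mult_vec_index[OF assms(3,4,2) j]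
      sigmaZ_mult_vec_index[OF assms(3,4,2)] sigmaZZ_mult_vec_index[OF assms(3,4,2) j(1)]
    by (simp add: bond_diag_def bond_hop_def swap_bond_def algebra_simps)
  finally show ?thesis .
qed

lemma H_W_mult_vec_index:
  assumes "2 \<le> N" "v \<in> carrier_vec (2 ^ N)" "r < 2 ^ N"
  shows "(H_W N J \<gamma> *\<^sub>v v) $ r = of_real (J * (\<Sum>i<N. bond_diag N \<gamma> r i)) * v $ r
           + (\<Sum>i<N. of_real (- (J * \<gamma> * bond_hop N r i)) * v $ swap_bond N r i)"
proof -
  have "(H_W N J \<gamma> *\<^sub>v v) $ r = of_real J * (\<Sum>i<N. (bond_hamiltonian N \<gamma> i *\<^sub>v v) $ r)"
    unfolding H_W_eq_sum_bond_hamiltonian using assms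
    by (simp add: smult_mat_mult_vec_index[where n = "2 ^ N"] mat_sum_mult_vec_index
        mat_sum_carrier_mat bond_hamiltonian_carrier_mat del: index_mult_mat_vec)
  also have "\<dots> = of_real J * (\<Sum>i<N. of_real (bond_diag N \<gamma> r i) * v $ r
                    - of_real (\<gamma> * bond_hop N r i) * v $ swap_bond N r i)"
    using assms by (simp add: bond_hamiltonian_mult_vec_index)
  finally show ?thesis
    by (simp add: sum_subtractf sum_distrib_left sum_distrib_right sum_negf ring_distribs mult.assoc)
qed

lemma sum_rotate: "(\<Sum>i<(N::nat). g ((i + 1) mod N)) = (\<Sum>i<N. g i :: 'a :: comm_monoid_add)"
proof -
  have "inj_on (\<lambda>i. (i + 1) mod N) {..<N}"
  proof (rule inj_onI)
    fix x y
    assume "x \<in> {..<N}" "y \<in> {..<N}" "(x + 1) mod N = (y + 1) mod N"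
    then show "x = y"
      using mod_less[of "x + 1" N] mod_less[of "y + 1" N]
      by (cases "x + 1 = N"; cases "y + 1 = N") auto
  qed
  then have "bij_betw (\<lambda>i. (i + 1) mod N) {..<N} {..<N}"
    by (simp add: bij_betw_def endo_inj_surj image_subset_iff)
  then show ?thesis
    by (rule sum.reindex_bij_betw)
qed

definition bond_energy :: "real \<Rightarrow> bool \<Rightarrow> bool \<Rightarrow> real" where
  "bond_energy \<gamma> a b = - zsign a - zsign b + (1 - \<gamma>) * zsign a * zsign b - \<gamma> * (if a = b then 0 else 2)"

lemma sum_bond_diag_minus_hop:
  "(\<Sum>i<N. bond_diag N \<gamma> r i - \<gamma> * bond_hop N r i) =
   (\<Sum>i<N. bond_energy \<gamma> (bit r i) (bit r ((i + 1) mod N)))"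
proof -
  have "(\<Sum>i<N. zsign (bit r ((i + 1) mod N))) = (\<Sum>i<N. zsign (bit r i))"
    by (rule sum_rotate)
  then show ?thesis
    by (simp add: bond_diag_def bond_hop_def bond_energy_def sum.distrib sum_subtractf
        sum_distrib_left algebra_simps)
qed

lemma bond_energy_ge: "-1 - \<gamma> \<le> bond_energy \<gamma> a b"
  by (cases a; cases b) (auto simp: bond_energy_def zsign_def)

lemma bond_energy_eq_if_not_both: "\<not> (a \<and> b) \<Longrightarrow> bond_energy \<gamma> a b = -1 - \<gamma>"
  by (cases a; cases b) (auto simp: bond_energy_def zsign_def)

definition hamming_weight :: "nat \<Rightarrow> nat \<Rightarrow> nat" where
  "hamming_weight N k = card {j. j < N \<and> bit k j}"

lemma hamming_weight_eq_0_iff: "k < 2 ^ N \<Longrightarrow> hamming_weight N k = 0 \<longleftrightarrow> k = 0"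
  unfolding hamming_weight_def by (auto intro: eq_if_bits_eq_below[of k N 0])

lemma sum_bond_energy_ge:
  "- (real N * (1 + \<gamma>)) \<le> (\<Sum>i<N. bond_diag N \<gamma> r i - \<gamma> * bond_hop N r i)"
  unfolding sum_bond_diag_minus_hop
  using sum_mono[of "{..<N}" "\<lambda>_. -1 - \<gamma>"] bond_energy_ge by (simp add: algebra_simps)

lemma sum_bond_energy_if_hamming_weight_le_1:
  assumes "2 \<le> N" "hamming_weight N r \<le> 1"
  shows "(\<Sum>i<N. bond_diag N \<gamma> r i - \<gamma> * bond_hop N r i) = - (real N * (1 + \<gamma>))"
proof -
  have "\<not> (bit r i \<and> bit r ((i + 1) mod N))" if "i < N" for i
  proof
    assume "bit r i \<and> bit r ((i + 1) mod N)"
    then have "{i, (i + 1) mod N} \<subseteq> {j. j < N \<and> bit r j}"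
      using that by auto
    then have "card {i, (i + 1) mod N} \<le> hamming_weight N r"
      unfolding hamming_weight_def by (intro card_mono) auto
    with assms next_site_neq[OF assms(1) that] show False
      by simp
  qed
  then show ?thesis
    unfolding sum_bond_diag_minus_hop by (simp add: bond_energy_eq_if_not_both algebra_simps)
qed

lemma hamming_weight_swap_bond:
  assumes "2 \<le> N" "i < N" "bond_hop N r i \<noteq> 0"
  shows "hamming_weight N (swap_bond N r i) = hamming_weight N r"
proof -
  let ?j = "(i + 1) mod N"
  let ?\<tau> = "transpose i ?j"
  have j: "?j < N" "?j \<noteq> i"
    using assms next_site_neq by auto
  have "bit r i \<noteq> bit r ?j"
    using assms(3) by (metis bond_hop_def)
  then have "bit (swap_bond N r i) t = bit r (?\<tau> t)" for t
    using j by (auto simp: swap_bond_def bit_flip_bit_iff transpose_def)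
  then have "{t. t < N \<and> bit (swap_bond N r i) t} = ?\<tau> ` {t. t < N \<and> bit r t}"
    using assms(2) j by (auto simp: in_transpose_image_iff transpose_def)
  then show ?thesis
    unfolding hamming_weight_def by (simp add: card_image)
qed

lemma H_W_mult_weight_function_vec:
  fixes f :: "nat \<Rightarrow> complex"
  assumes N: "2 \<le> N" and v: "v \<in> carrier_vec (2 ^ N)"
    and amplitude: "\<And>k. k < 2 ^ N \<Longrightarrow> v $ k = f (hamming_weight N k)"
    and vanishing: "\<And>w. 2 \<le> w \<Longrightarrow> f w = 0"
  shows "H_W N J \<gamma> *\<^sub>v v = of_real (- (J * real N * (1 + \<gamma>))) \<cdot>\<^sub>v v"
proof (rule eq_vecI)
  fix r
  assume "r < dim_vec (of_real (- (J * real N * (1 + \<gamma>))) \<cdot>\<^sub>v v)"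
  then have r: "r < 2 ^ N"
    using v by simp
  have hops: "(\<Sum>i<N. of_real (- (J * \<gamma> * bond_hop N r i)) * v $ swap_bond N r i)
          = (\<Sum>i<N. of_real (- (J * \<gamma> * bond_hop N r i)) * v $ r)"
  proof (rule sum.cong)
    fix i
    assume "i \<in> {..<N}"
    then show "of_real (- (J * \<gamma> * bond_hop N r i)) * v $ swap_bond N r i
                 = of_real (- (J * \<gamma> * bond_hop N r i)) * v $ r"
      using amplitude r swap_bond_less_pow2[OF N _ r] hamming_weight_swap_bond[OF N]
      by (cases "bond_hop N r i = 0") auto
  qed simp
  have "(H_W N J \<gamma> *\<^sub>v v) $ r
               = of_real (J * (\<Sum>i<N. bond_diag N \<gamma> r i - \<gamma> * bond_hop N r i)) * v $ r"
    unfolding H_W_mult_vec_index[OF N v r] hops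
    by (simp add: sum_subtractf sum_distrib_left sum_distrib_right sum_negf algebra_simps)
  also have "\<dots> = of_real (- (J * real N * (1 + \<gamma>))) * v $ r"
  proof (cases "hamming_weight N r \<le> 1")
    case True
    then show ?thesis
      using sum_bond_energy_if_hamming_weight_le_1[OF N] by simp
  next
    case False
    then show ?thesis
      using amplitude[OF r] vanishing by simp
  qed
  finally show "(H_W N J \<gamma> *\<^sub>v v) $ r = (of_real (- (J * real N * (1 + \<gamma>))) \<cdot>\<^sub>v v) $ r"
    using r v by simp
qed (use v H_W_carrier_mat in auto)

lemma H_W_eigenvalue_Re_ge:
  assumes N: "2 \<le> N" and "0 \<le> J" "0 \<le> \<gamma>" "eigenvalue (H_W N J \<gamma>) \<mu>"
  shows "- (J * real N * (1 + \<gamma>)) \<le> Re \<mu>"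
proof (rule eigenvalue_Re_ge_row_bound[where I = "{..<N}"])
  show "(H_W N J \<gamma> *\<^sub>v v) $ r = of_real (J * (\<Sum>i<N. bond_diag N \<gamma> r i)) * v $ r
          + (\<Sum>i<N. of_real (- (J * \<gamma> * bond_hop N r i)) * v $ swap_bond N r i)"
    if "v \<in> carrier_vec (2 ^ N)" "r < 2 ^ N" for v r
    using H_W_mult_vec_index[OF N that] .
  show "- (J * real N * (1 + \<gamma>))
          \<le> Re (of_real (J * (\<Sum>i<N. bond_diag N \<gamma> r i)))
            - (\<Sum>i<N. cmod (of_real (- (J * \<gamma> * bond_hop N r i))))" for r
  proof -
    have "cmod (complex_of_real (- (J * \<gamma> * bond_hop N r i))) = J * (\<gamma> * bond_hop N r i)" for i
      using assms by (simp only: norm_of_real) (simp add: abs_mult bond_hop_def)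
    then have "(\<Sum>i<N. cmod (complex_of_real (- (J * \<gamma> * bond_hop N r i))))
            = J * (\<Sum>i<N. \<gamma> * bond_hop N r i)"
      by (simp add: sum_distrib_left)
    then show ?thesis
      using mult_left_mono[OF sum_bond_energy_ge[of N \<gamma> r] \<open>0 \<le> J\<close>]
      by (simp add: sum_subtractf right_diff_distrib)
  qed
qed (use assms H_W_carrier_mat swap_bond_less_pow2 in auto)

lemma hamming_weight_1: "0 < N \<Longrightarrow> hamming_weight N 1 = 1"
proof -
  assume "0 < N"
  then have "{j. j < N \<and> bit (1::nat) j} = {0}"
    unfolding bit_1_iff by auto
  then show ?thesis
    by (simp add: hamming_weight_def)
qed

lemma W_state_index:
  "k < 2 ^ N \<Longrightarrow> W_state N $ k = (if hamming_weight N k = 1 then of_real (1 / sqrt (real N)) else 0)"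
  by (simp add: W_state_def hamming_weight_def qbit_eq_bit)

lemma zero_state_index: "k < 2 ^ N \<Longrightarrow> zero_state N $ k = (if hamming_weight N k = 0 then 1 else 0)"
  by (simp add: zero_state_def hamming_weight_eq_0_iff)

lemma one_less_pow2: "0 < N \<Longrightarrow> 1 < (2::nat) ^ N"
  by (rule one_less_power) auto

lemma W_state_1_neq_0: "0 < N \<Longrightarrow> W_state N $ 1 \<noteq> 0"
  unfolding W_state_index[OF one_less_pow2] hamming_weight_1 by simp

lemma zero_state_1_eq_0: "0 < N \<Longrightarrow> zero_state N $ 1 = 0"
  using one_less_pow2 by (simp add: zero_state_def)

lemma W_state_eigenvector:
  assumes "2 \<le> N"
  shows "eigenvector (H_W N J \<gamma>) (W_state N) (of_real (- (J * real N * (1 + \<gamma>))))"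
proof -
  have W: "W_state N \<in> carrier_vec (2 ^ N)"
    by (simp add: W_state_def)
  moreover have "W_state N \<noteq> 0\<^sub>v (2 ^ N)"
    using W_state_1_neq_0[of N] one_less_pow2[of N] assms by auto
  moreover have "H_W N J \<gamma> *\<^sub>v W_state N = of_real (- (J * real N * (1 + \<gamma>))) \<cdot>\<^sub>v W_state N"
    using W_state_index
    by (intro H_W_mult_weight_function_vec[OF assms W,
          where f = "\<lambda>w. if w = 1 then of_real (1 / sqrt (real N)) else 0"]) auto
  ultimately show ?thesis
    using H_W_carrier_mat[of N J \<gamma>] by (simp add: eigenvector_def)
qed

lemma zero_state_eigenvector:
  assumes "2 \<le> N"
  shows "eigenvector (H_W N J \<gamma>) (zero_state N) (of_real (- (J * real N * (1 + \<gamma>))))"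
proof -
  have zero: "zero_state N \<in> carrier_vec (2 ^ N)"
    by (simp add: zero_state_def)
  moreover have "zero_state N \<noteq> 0\<^sub>v (2 ^ N)"
  proof
    assume "zero_state N = 0\<^sub>v (2 ^ N)"
    then have "zero_state N $ 0 = 0"
      by simp
    then show False
      by (simp add: zero_state_def)
  qed
  moreover have "H_W N J \<gamma> *\<^sub>v zero_state N = of_real (- (J * real N * (1 + \<gamma>))) \<cdot>\<^sub>v zero_state N"
    using zero_state_index
    by (intro H_W_mult_weight_function_vec[OF assms zero, where f = "\<lambda>w. if w = 0 then 1 else 0"])
      auto
  ultimately show ?thesis
    using H_W_carrier_mat[of N J \<gamma>] by (simp add: eigenvector_def)
qed

theorem mainTheorem13:
  fixes N :: nat and J \<gamma> :: real
  assumes "N \<ge> 3" and "J > 0" and "\<gamma> > 0"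
  shows "\<exists>E :: complex.
           E \<in> \<real>
         \<and> eigenvector (H_W N J \<gamma>) (W_state N) E
         \<and> (\<forall>\<mu>. eigenvalue (H_W N J \<gamma>) \<mu> \<longrightarrow> Re E \<le> Re \<mu>)
         \<and> eigenvector (H_W N J \<gamma>) (zero_state N) E
         \<and> (\<forall>c :: complex. W_state N \<noteq> c \<cdot>\<^sub>v zero_state N)"
proof (intro exI[of _ "of_real (- (J * real N * (1 + \<gamma>)))"] conjI allI impI)
  have N: "2 \<le> N"
    using assms(1) by simp
  show "eigenvector (H_W N J \<gamma>) (W_state N) (of_real (- (J * real N * (1 + \<gamma>))))"
    using N by (rule W_state_eigenvector)
  show "eigenvector (H_W N J \<gamma>) (zero_state N) (of_real (- (J * real N * (1 + \<gamma>))))"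
    using N by (rule zero_state_eigenvector)
  show "Re (of_real (- (J * real N * (1 + \<gamma>)))) \<le> Re \<mu>" if "eigenvalue (H_W N J \<gamma>) \<mu>" for \<mu>
    using H_W_eigenvalue_Re_ge[OF N _ _ that] assms by simp
  show "W_state N \<noteq> c \<cdot>\<^sub>v zero_state N" for c
  proof
    assume "W_state N = c \<cdot>\<^sub>v zero_state N"
    then have "W_state N $ 1 = c * zero_state N $ 1"
      using one_less_pow2[of N] N by (simp add: zero_state_def)
    then show False
      using W_state_1_neq_0[of N] zero_state_1_eq_0[of N] N by simp
  qed
qed (rule Reals_of_real)

end
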